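(* Let $G$ be a harmonic-even partial cube and $F_{ab}$ a $\Theta$-class of $G$. If $\alpha$ is an automorphism of $G$ such that $v^{\alpha}=v$ and $u^{\alpha}=u$ for every edge $vu\in F_{ab}$, then $\alpha$ is the identity.
   Context: A partial cube is a graph isometrically embeddable into a hypercube. On edges define $ab\,\Theta\,xy$ iff $d(a,x)+d(b,y)\neq d(a,y)+d(b,x)$ ($d$ the shortest-path distance); in a partial cube this is an equivalence relation, and $F_{uv}$ denotes the $\Theta$-class of edge $uv$. A graph is harmonic-even if every vertex $v$ has a unique vertex $\bar v$ at distance $\mathrm{diam}(G)$ and $\bar u\bar v$ is an edge whenever $uv$ is an edge. $v^{\alpha}$ denotes the image of $v$ under $\alpha$. *)

theory Defs
  imports Main
begin

definition graph :: "'a set \<Rightarrow> ('a \<Rightarrow> 'a \<Rightarrow> bool) \<Rightarrow> bool" where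
  "graph V E \<longleftrightarrow> (\<forall>u v. E u v \<longrightarrow> u \<in> V \<and> v \<in> V) \<and> (\<forall>u v. E u v \<longrightarrow> E v u) \<and> (\<forall>v. \<not> E v v)"

fun walk :: "('a \<Rightarrow> 'a \<Rightarrow> bool) \<Rightarrow> 'a list \<Rightarrow> bool" where
  "walk E [] = False"
| "walk E [x] = True"
| "walk E (x # y # xs) = (E x y \<and> walk E (y # xs))"

definition gdist :: "('a \<Rightarrow> 'a \<Rightarrow> bool) \<Rightarrow> 'a \<Rightarrow> 'a \<Rightarrow> nat" where
  "gdist E u v = (LEAST n. \<exists>xs. walk E xs \<and> hd xs = u \<and> last xs = v \<and> length xs = Suc n)"

definition connected_graph :: "'a set \<Rightarrow> ('a \<Rightarrow> 'a \<Rightarrow> bool) \<Rightarrow> bool" where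
  "connected_graph V E \<longleftrightarrow> (\<forall>u\<in>V. \<forall>v\<in>V. \<exists>xs. walk E xs \<and> hd xs = u \<and> last xs = v)"

definition diam :: "'a set \<Rightarrow> ('a \<Rightarrow> 'a \<Rightarrow> bool) \<Rightarrow> nat" where
  "diam V E = Max {gdist E u v | u v. u \<in> V \<and> v \<in> V}"

text \<open>Partial cube: finite connected graph isometrically embeddable into a hypercube Q_n,
  whose vertices are the subsets of {..<n}, with Hamming distance = size of symmetric difference.\<close>
definition partial_cube :: "'a set \<Rightarrow> ('a \<Rightarrow> 'a \<Rightarrow> bool) \<Rightarrow> bool" where
  "partial_cube V E \<longleftrightarrow> graph V E \<and> finite V \<and> connected_graph V E \<and>
     (\<exists>(n::nat) (f :: 'a \<Rightarrow> nat set). (\<forall>u\<in>V. f u \<subseteq> {..<n}) \<and>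
        (\<forall>u\<in>V. \<forall>v\<in>V. card ((f u - f v) \<union> (f v - f u)) = gdist E u v))"

definition antipode :: "'a set \<Rightarrow> ('a \<Rightarrow> 'a \<Rightarrow> bool) \<Rightarrow> 'a \<Rightarrow> 'a" where
  "antipode V E v = (THE w. w \<in> V \<and> gdist E v w = diam V E)"

definition harmonic_even :: "'a set \<Rightarrow> ('a \<Rightarrow> 'a \<Rightarrow> bool) \<Rightarrow> bool" where
  "harmonic_even V E \<longleftrightarrow> (\<forall>v\<in>V. \<exists>!w. w \<in> V \<and> gdist E v w = diam V E) \<and>
     (\<forall>u v. E u v \<longrightarrow> E (antipode V E u) (antipode V E v))"

definition Theta :: "('a \<Rightarrow> 'a \<Rightarrow> bool) \<Rightarrow> 'a \<Rightarrow> 'a \<Rightarrow> 'a \<Rightarrow> 'a \<Rightarrow> bool" where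
  "Theta E a b x y \<longleftrightarrow> E a b \<and> E x y \<and>
     gdist E a x + gdist E b y \<noteq> gdist E a y + gdist E b x"

definition theta_class :: "('a \<Rightarrow> 'a \<Rightarrow> bool) \<Rightarrow> 'a \<Rightarrow> 'a \<Rightarrow> ('a \<times> 'a) set" where
  "theta_class E a b = {(x, y). Theta E a b x y}"

definition automorphism :: "'a set \<Rightarrow> ('a \<Rightarrow> 'a \<Rightarrow> bool) \<Rightarrow> ('a \<Rightarrow> 'a) \<Rightarrow> bool" where
  "automorphism V E \<alpha> \<longleftrightarrow> bij_betw \<alpha> V V \<and> (\<forall>u\<in>V. \<forall>v\<in>V. E u v \<longleftrightarrow> E (\<alpha> u) (\<alpha> v))"

end

(*
  In a harmonic-even partial cube the set of coordinates in which a vertex differs from its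
  antipode is the same for all vertices and contains every coordinate separating two vertices,
  so every vertex v lies on a geodesic from any u to its antipode: d(u,v) + d(v,u') = diam.

  Let w be a vertex, z its image under alpha and z' the antipode of z, and say a is closer than
  b to w. Since a and b are fixed, a is also closer than b to z, hence farther than b from z'.
  A shortest w-z' path therefore crosses F_ab, so it contains a fixed vertex x. Then
  d(z,x) = d(w,x), and as x lies on a geodesic from w to z' while both x and w lie on geodesics
  from z to z', this forces d(z,w) = 0.
*)

theory Submission
  imports Defs
begin

lemma walk_nonempty: "walk E xs \<Longrightarrow> xs \<noteq> []"
  by (cases xs) auto

lemma walk_append_iff: "walk E (xs @ y # ys) \<longleftrightarrow> walk E (xs @ [y]) \<and> walk E (y # ys)"
proof (induction xs)
  case Nil
  then show ?case by simp
next
  case (Cons x xs)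
  then show ?case by (cases xs) auto
qed

lemma walk_rev: "symp E \<Longrightarrow> walk E xs \<Longrightarrow> walk E (rev xs)"
proof (induction E xs rule: walk.induct)
  case (3 E x y xs)
  then have "walk E (rev xs @ [y])" "E y x" by (auto dest: sympD)
  then show ?case using walk_append_iff[of E "rev xs" y "[x]"] by simp
qed simp_all

lemma walk_map:
  "walk E xs \<Longrightarrow> (\<forall>x\<in>set xs. \<forall>y\<in>set xs. E x y \<longrightarrow> E (h x) (h y)) \<Longrightarrow> walk E (map h xs)"
  by (induction E xs rule: walk.induct) auto

lemma walk_subset_vertices: "graph V E \<Longrightarrow> walk E xs \<Longrightarrow> hd xs \<in> V \<Longrightarrow> set xs \<subseteq> V"
  by (induction E xs rule: walk.induct) (auto simp: graph_def)

lemma walk_crossing_edge: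
  "walk E xs \<Longrightarrow> P (hd xs) \<Longrightarrow> \<not> P (last xs) \<Longrightarrow>
   \<exists>ys x y zs. xs = ys @ x # y # zs \<and> P x \<and> \<not> P y"
proof (induction E xs rule: walk.induct)
  case (3 E x y xs)
  show ?case
  proof (cases "P y")
    case True
    with 3 obtain ys u v zs where "y # xs = ys @ u # v # zs" "P u" "\<not> P v" by auto
    then show ?thesis by (metis append_Cons)
  next
    case False
    with 3 show ?thesis by (metis append_Nil list.sel(1))
  qed
qed simp_all

lemma gdist_le_length: "walk E xs \<Longrightarrow> gdist E (hd xs) (last xs) \<le> length xs - 1"
  unfolding gdist_def by (rule Least_le) (cases xs, auto)

lemma shortest_walk:
  assumes "walk E xs"
  shows "\<exists>ys. walk E ys \<and> hd ys = hd xs \<and> last ys = last xs \<and>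
    length ys = Suc (gdist E (hd xs) (last xs))"
proof -
  have "\<exists>n ys. walk E ys \<and> hd ys = hd xs \<and> last ys = last xs \<and> length ys = Suc n"
    using assms by (intro exI[of _ "length xs - 1"] exI[of _ xs]) (cases xs, auto)
  then show ?thesis unfolding gdist_def by (rule LeastI_ex)
qed

lemma gdist_self: "gdist E u u = 0"
  using gdist_le_length[of E "[u]"] by simp

lemma gdist_eq_0_imp_eq: "walk E xs \<Longrightarrow> gdist E (hd xs) (last xs) = 0 \<Longrightarrow> hd xs = last xs"
  using shortest_walk[of E xs] by (auto simp: length_Suc_conv)

lemma gdist_edge: "E x y \<Longrightarrow> x \<noteq> y \<Longrightarrow> gdist E x y = 1"
  using gdist_le_length[of E "[x, y]"] gdist_eq_0_imp_eq[of E "[x, y]"] by fastforce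

lemma gdist_commute:
  assumes "symp E"
  shows "gdist E u v = gdist E v u"
proof -
  have "\<exists>ys. walk E ys \<and> hd ys = v \<and> last ys = u \<and> length ys = Suc n"
    if "walk E xs" "hd xs = u" "last xs = v" "length xs = Suc n" for u v n xs
    using that walk_rev[OF assms] by (intro exI[of _ "rev xs"]) (simp add: hd_rev last_rev)
  then have "(\<exists>xs. walk E xs \<and> hd xs = u \<and> last xs = v \<and> length xs = Suc n) \<longleftrightarrow>
        (\<exists>xs. walk E xs \<and> hd xs = v \<and> last xs = u \<and> length xs = Suc n)" for u v n
    by blast
  then show ?thesis unfolding gdist_def by simp
qed

lemma gdist_on_shortest_walk:
  assumes "walk E ps" "hd ps = u" "last ps = v" "length ps = Suc (gdist E u v)" "x \<in> set ps"
  shows "gdist E u x + gdist E x v \<le> gdist E u v"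
proof -
  obtain ys zs where ps: "ps = ys @ x # zs" using split_list[OF assms(5)] by blast
  have "walk E (ys @ [x])" "walk E (x # zs)"
    using assms(1) walk_append_iff[of E ys x zs] ps by simp_all
  moreover have "hd (ys @ [x]) = u" using assms(2) ps by (cases ys) auto
  moreover have "last (x # zs) = v" using assms(3) ps by simp
  ultimately have "gdist E u x \<le> length ys" "gdist E x v \<le> length zs"
    using gdist_le_length[of E "ys @ [x]"] gdist_le_length[of E "x # zs"] by auto
  then show ?thesis using assms(4) ps by simp
qed

lemma gdist_map_le:
  assumes "graph V E" "connected_graph V E" "u \<in> V" "v \<in> V"
    and "\<forall>x\<in>V. h x \<in> V" "\<forall>x\<in>V. \<forall>y\<in>V. E x y \<longrightarrow> E (h x) (h y)"
  shows "gdist E (h u) (h v) \<le> gdist E u v"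
proof -
  obtain xs where "walk E xs" "hd xs = u" "last xs = v"
    using assms(2-4) unfolding connected_graph_def by blast
  then obtain ys where ys: "walk E ys" "hd ys = u" "last ys = v" "length ys = Suc (gdist E u v)"
    using shortest_walk by metis
  have "set ys \<subseteq> V" using walk_subset_vertices[OF assms(1) ys(1)] ys(2) assms(3) by simp
  then have "walk E (map h ys)" using walk_map[OF ys(1)] assms(6) by blast
  from gdist_le_length[OF this] walk_nonempty[OF ys(1)] ys show ?thesis
    by (simp add: hd_map last_map)
qed

lemma automorphism_apply: "automorphism V E \<alpha> \<Longrightarrow> x \<in> V \<Longrightarrow> \<alpha> x \<in> V"
  unfolding automorphism_def by (metis bij_betw_apply)

lemma automorphism_inv_into:
  assumes "automorphism V E \<alpha>"
  shows "automorphism V E (inv_into V \<alpha>)"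
proof -
  have bij: "bij_betw \<alpha> V V" and E: "\<forall>u\<in>V. \<forall>v\<in>V. E u v \<longleftrightarrow> E (\<alpha> u) (\<alpha> v)"
    using assms unfolding automorphism_def by simp_all
  have "inv_into V \<alpha> x \<in> V" if "x \<in> V" for x
    using bij_betw_apply[OF bij_betw_inv_into[OF bij] that] .
  moreover have "\<alpha> (inv_into V \<alpha> x) = x" if "x \<in> V" for x
    using bij that f_inv_into_f[of x \<alpha> V] unfolding bij_betw_def by simp
  ultimately show ?thesis using E bij_betw_inv_into[OF bij] unfolding automorphism_def by metis
qed

lemma automorphism_gdist:
  assumes g: "graph V E" and c: "connected_graph V E" and \<alpha>: "automorphism V E \<alpha>"
    and "u \<in> V" "v \<in> V"
  shows "gdist E (\<alpha> u) (\<alpha> v) = gdist E u v"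
proof -
  have le: "gdist E (\<beta> x) (\<beta> y) \<le> gdist E x y"
    if "automorphism V E \<beta>" "x \<in> V" "y \<in> V" for \<beta> x y
    using gdist_map_le[OF g c that(2,3)] that(1) bij_betw_apply
    unfolding automorphism_def by metis
  have "inv_into V \<alpha> (\<alpha> x) = x" if "x \<in> V" for x
    using \<alpha> that unfolding automorphism_def bij_betw_def by simp
  then show ?thesis
    using le[OF \<alpha> assms(4,5)] le[OF automorphism_inv_into[OF \<alpha>], of "\<alpha> u" "\<alpha> v"] assms(4,5)
      automorphism_apply[OF \<alpha>] by (metis le_antisym)
qed

lemma Theta_swap: "symp E \<Longrightarrow> Theta E b a x y \<longleftrightarrow> Theta E a b x y"
  unfolding Theta_def by (auto dest: sympD)

lemma Theta_edge_self:
  assumes "graph V E" "E a b"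
  shows "Theta E a b a b" "Theta E a b b a"
proof -
  have "E b a" "a \<noteq> b" using assms unfolding graph_def by auto
  then have "gdist E a b = 1" "gdist E b a = 1"
    using gdist_edge[of E a b] gdist_edge[of E b a] assms(2) by auto
  then show "Theta E a b a b" "Theta E a b b a"
    using assms(2) \<open>E b a\<close> unfolding Theta_def by (simp_all add: gdist_self)
qed

lemma walk_Theta_edge:
  assumes "walk E xs" "E a b"
    and "gdist E a (hd xs) < gdist E b (hd xs)" "gdist E b (last xs) < gdist E a (last xs)"
  shows "\<exists>x\<in>set xs. \<exists>y. Theta E a b x y"
proof -
  obtain ys x y zs where xs: "xs = ys @ x # y # zs"
    and x: "gdist E a x < gdist E b x" and y: "\<not> gdist E a y < gdist E b y"
    using walk_crossing_edge[OF assms(1), of "\<lambda>v. gdist E a v < gdist E b v"] assms(3,4) by auto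
  have "E x y" using assms(1) walk_append_iff[of E ys x "y # zs"] xs by simp
  \<comment> \<open>x strictly closer to a and y at least as close to b already make the sums differ\<close>
  then have "Theta E a b x y" using assms(2) x y unfolding Theta_def by linarith
  then show ?thesis using xs by auto
qed

lemma sym_diff_singleton: "sym_diff A {j} = (if j \<in> A then A - {j} else insert j A)"
  by auto

lemma card_sym_diff_singleton_neq: "finite A \<Longrightarrow> card (sym_diff A {j}) \<noteq> card A"
  by (auto simp: sym_diff_singleton card_gt_0_iff dest: card_Diff1_less)

lemma gdist_le_diam: "finite V \<Longrightarrow> u \<in> V \<Longrightarrow> v \<in> V \<Longrightarrow> gdist E u v \<le> diam V E"
  unfolding diam_def by (rule Max_ge) (auto intro: finite_image_set2)

lemma harmonic_even_antipode:
  assumes "harmonic_even V E" "u \<in> V"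
  shows "antipode V E u \<in> V" "gdist E u (antipode V E u) = diam V E"
proof -
  have "\<exists>!w. w \<in> V \<and> gdist E u w = diam V E"
    using assms unfolding harmonic_even_def by blast
  from theI'[OF this] show "antipode V E u \<in> V" "gdist E u (antipode V E u) = diam V E"
    unfolding antipode_def by simp_all
qed

locale hamming_embedding =
  fixes V :: "'a set" and E :: "'a \<Rightarrow> 'a \<Rightarrow> bool" and f :: "'a \<Rightarrow> 'b set"
  assumes graph: "graph V E"
    and finite_label: "u \<in> V \<Longrightarrow> finite (f u)"
    and card_sym_diff: "u \<in> V \<Longrightarrow> v \<in> V \<Longrightarrow> card (sym_diff (f u) (f v)) = gdist E u v"
begin

lemma edge_vertices: "E x y \<Longrightarrow> x \<in> V \<and> y \<in> V"
  using graph unfolding graph_def by blast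

lemma edge_sym_diff_singleton:
  assumes "E x y"
  obtains j where "f y = sym_diff (f x) {j}"
proof -
  have "x \<noteq> y" using graph assms unfolding graph_def by auto
  then have "card (sym_diff (f x) (f y)) = 1"
    using card_sym_diff edge_vertices[OF assms] gdist_edge[of E x y] assms by simp
  then obtain j where "sym_diff (f x) (f y) = {j}" by (rule card_1_singletonE)
  then have "f y = sym_diff (f x) {j}" by blast
  then show ?thesis by (rule that)
qed

lemma gdist_edge_ends_neq:
  assumes "E a b" "v \<in> V"
  shows "gdist E a v \<noteq> gdist E b v"
proof -
  obtain j where "f b = sym_diff (f a) {j}" using edge_sym_diff_singleton[OF assms(1)] .
  then have "sym_diff (f b) (f v) = sym_diff (sym_diff (f a) (f v)) {j}" by blast
  moreover have "finite (sym_diff (f a) (f v))"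
    using finite_label edge_vertices[OF assms(1)] assms(2) by blast
  ultimately show ?thesis
    using card_sym_diff_singleton_neq card_sym_diff edge_vertices[OF assms(1)] assms(2) by metis
qed

end

locale harmonic_even_hamming = hamming_embedding +
  assumes finite_vertices: "finite V"
    and connected: "connected_graph V E"
    and harmonic_even: "harmonic_even V E"
begin

definition antipodal_set :: "'a \<Rightarrow> 'b set" where
  "antipodal_set x = sym_diff (f x) (f (antipode V E x))"

lemma card_antipodal_set: "x \<in> V \<Longrightarrow> card (antipodal_set x) = diam V E"
  unfolding antipodal_set_def
  using card_sym_diff harmonic_even_antipode[OF harmonic_even] by simp

lemma finite_antipodal_set: "x \<in> V \<Longrightarrow> finite (antipodal_set x)"
  unfolding antipodal_set_def
  using finite_label harmonic_even_antipode(1)[OF harmonic_even] by blast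

lemma mem_antipodal_set:
  assumes "x \<in> V" "card (sym_diff (antipodal_set x) {j}) \<le> diam V E"
  shows "j \<in> antipodal_set x"
  using assms card_antipodal_set finite_antipodal_set
  by (auto simp: sym_diff_singleton split: if_splits)

lemma antipodal_set_edge:
  assumes e: "E x y"
  shows "antipodal_set y = antipodal_set x \<and> sym_diff (f x) (f y) \<subseteq> antipodal_set x"
proof -
  define M where "M = antipodal_set x"
  let ?x' = "antipode V E x" and ?y' = "antipode V E y"
  have x: "x \<in> V" and y: "y \<in> V" using edge_vertices[OF e] by auto
  have x': "?x' \<in> V" and y': "?y' \<in> V"
    using harmonic_even_antipode(1)[OF harmonic_even] x y by auto
  obtain j where fy: "f y = sym_diff (f x) {j}" using edge_sym_diff_singleton[OF e] .
  have "E ?x' ?y'" using harmonic_even e unfolding harmonic_even_def by blast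
  then obtain j' where fy': "f ?y' = sym_diff (f ?x') {j'}" by (rule edge_sym_diff_singleton)
  have "sym_diff (f y) (f ?x') = sym_diff M {j}" "sym_diff (f x) (f ?y') = sym_diff M {j'}"
    unfolding fy fy' M_def antipodal_set_def by blast+
  \<comment> \<open>both distances are at most the diameter, which is the size of M\<close>
  then have j: "j \<in> M" and j': "j' \<in> M"
    using mem_antipodal_set[OF x] card_sym_diff gdist_le_diam[OF finite_vertices] x y x' y'
    unfolding M_def by metis+
  have My: "antipodal_set y = sym_diff (sym_diff M {j}) {j'}"
    unfolding antipodal_set_def M_def fy fy' by blast
  \<comment> \<open>otherwise the antipodal set of y would be two elements smaller than that of x\<close>
  have "j = j'"
  proof (rule ccontr)
    assume "j \<noteq> j'"
    then have "antipodal_set y = M - {j, j'}" using My j j' by blast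
    then have "card (antipodal_set y) = card M - 2"
      using j j' \<open>j \<noteq> j'\<close> finite_antipodal_set[OF x] unfolding M_def by simp
    moreover have "card {j, j'} \<le> card M"
      using j j' finite_antipodal_set[OF x] card_mono unfolding M_def
    by (metis empty_subsetI insert_subset)
    ultimately show False
      using card_antipodal_set x y \<open>j \<noteq> j'\<close> unfolding M_def by simp
  qed
  then have "antipodal_set y = M" using My by blast
  moreover have "sym_diff (f x) (f y) \<subseteq> M" using fy j by blast
  ultimately show ?thesis unfolding M_def by simp
qed

lemma antipodal_set_walk:
  "walk E xs \<Longrightarrow> antipodal_set (last xs) = antipodal_set (hd xs) \<and>
     sym_diff (f (hd xs)) (f (last xs)) \<subseteq> antipodal_set (hd xs)"
proof (induction xs rule: induct_list012)
  case (3 x y xs)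
  then have e: "E x y" and "antipodal_set (last (y # xs)) = antipodal_set y"
    "sym_diff (f y) (f (last (y # xs))) \<subseteq> antipodal_set y" by auto
  then show ?case using antipodal_set_edge[OF e] by auto
qed simp_all

lemma gdist_add_gdist_antipode:
  assumes u: "u \<in> V" and v: "v \<in> V"
  shows "gdist E u v + gdist E v (antipode V E u) = diam V E"
proof -
  define M where "M = antipodal_set u"
  define X where "X = sym_diff (f u) (f v)"
  obtain xs where "walk E xs" "hd xs = u" "last xs = v"
    using connected u v unfolding connected_graph_def by blast
  then have XM: "X \<subseteq> M" using antipodal_set_walk unfolding X_def M_def by blast
  have "sym_diff (f v) (f (antipode V E u)) = M - X"
    using XM unfolding M_def X_def antipodal_set_def by blast
  then have "gdist E v (antipode V E u) = card (M - X)"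
    using card_sym_diff v harmonic_even_antipode(1)[OF harmonic_even u] by metis
  moreover have "gdist E u v = card X" using card_sym_diff u v unfolding X_def by simp
  moreover have "card X + card (M - X) = card M"
    using card_Diff_subset[OF _ XM] card_mono[OF _ XM] finite_antipodal_set[OF u]
      finite_subset[OF XM] unfolding M_def by simp
  ultimately show ?thesis using card_antipodal_set[OF u] unfolding M_def by simp
qed

end

lemma partial_cube_hamming_embedding:
  assumes "partial_cube V E"
  obtains f :: "'a \<Rightarrow> nat set" where "hamming_embedding V E f"
  using assms unfolding partial_cube_def hamming_embedding_def
  by (metis finite_lessThan finite_subset)

lemma partial_cube_gdist_edge_ends_neq:
  "partial_cube V E \<Longrightarrow> E a b \<Longrightarrow> v \<in> V \<Longrightarrow> gdist E a v \<noteq> gdist E b v"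
  by (metis partial_cube_hamming_embedding hamming_embedding.gdist_edge_ends_neq)

lemma partial_cube_gdist_add_gdist_antipode:
  assumes "partial_cube V E" "harmonic_even V E" "u \<in> V" "v \<in> V"
  shows "gdist E u v + gdist E v (antipode V E u) = diam V E"
proof -
  obtain f :: "'a \<Rightarrow> nat set" where "hamming_embedding V E f"
    using partial_cube_hamming_embedding[OF assms(1)] .
  then interpret harmonic_even_hamming V E f
    using assms(1,2) unfolding harmonic_even_hamming_def harmonic_even_hamming_axioms_def
      partial_cube_def by blast
  show ?thesis using gdist_add_gdist_antipode assms(3,4) .
qed

lemma automorphism_fixing_Theta_class_fixes_vertex:
  assumes pc: "partial_cube V E" and he: "harmonic_even V E" and ab: "E a b"
    and \<alpha>: "automorphism V E \<alpha>" and fixed: "\<And>x y. Theta E a b x y \<Longrightarrow> \<alpha> x = x"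
    and w: "w \<in> V" and closer: "gdist E a w < gdist E b w"
  shows "\<alpha> w = w"
proof -
  have g: "graph V E" and c: "connected_graph V E" using pc unfolding partial_cube_def by auto
  have a: "a \<in> V" and b: "b \<in> V" using g ab unfolding graph_def by auto
  have symm: "gdist E x y = gdist E y x" for x y
    using g gdist_commute unfolding graph_def by (metis sympI)
  define z where "z = \<alpha> w"
  define z' where "z' = antipode V E z"
  have z: "z \<in> V" using automorphism_apply[OF \<alpha> w] unfolding z_def .
  have z': "z' \<in> V" using harmonic_even_antipode(1)[OF he z] unfolding z_def z'_def by simp
  have antipodal: "gdist E z y + gdist E y z' = diam V E" if "y \<in> V" for y
    using partial_cube_gdist_add_gdist_antipode[OF pc he z that] unfolding z'_def .
  have "\<alpha> a = a" "\<alpha> b = b" using fixed Theta_edge_self[OF g ab] by blast+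
  then have "gdist E a z = gdist E a w" "gdist E b z = gdist E b w"
    using automorphism_gdist[OF g c \<alpha>] a b w unfolding z_def by metis+
  then have "gdist E b z' < gdist E a z'"
    using antipodal[OF a] antipodal[OF b] closer symm[of z a] symm[of z b] by linarith
  obtain ps0 where "walk E ps0" "hd ps0 = w" "last ps0 = z'"
    using c w z' unfolding connected_graph_def by blast
  then obtain ps where ps: "walk E ps" "hd ps = w" "last ps = z'" "length ps = Suc (gdist E w z')"
    using shortest_walk by metis
  then obtain x y where "x \<in> set ps" "Theta E a b x y"
    using walk_Theta_edge[OF ps(1) ab] closer \<open>gdist E b z' < gdist E a z'\<close> by auto
  then have on_geodesic: "gdist E w x + gdist E x z' \<le> gdist E w z'" and "\<alpha> x = x"
    using gdist_on_shortest_walk[OF ps] fixed by blast+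
  moreover have x: "x \<in> V"
    using walk_subset_vertices[OF g ps(1)] ps(2) w \<open>x \<in> set ps\<close> by auto
  ultimately have "gdist E z x = gdist E w x"
    using automorphism_gdist[OF g c \<alpha> w x] unfolding z_def by simp
  then have "gdist E z w = 0"
    using antipodal[OF w] antipodal[OF x] on_geodesic by linarith
  moreover obtain qs where "walk E qs" "hd qs = z" "last qs = w"
    using c w z unfolding connected_graph_def by blast
  ultimately show ?thesis using gdist_eq_0_imp_eq[of E qs] unfolding z_def by simp
qed

theorem lemma3:
  fixes V :: "'a set" and E :: "'a \<Rightarrow> 'a \<Rightarrow> bool" and \<alpha> :: "'a \<Rightarrow> 'a" and a b :: 'a
  assumes "partial_cube V E" and "harmonic_even V E"
    and "E a b"
    and "automorphism V E \<alpha>"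
    and "\<forall>(v, u) \<in> theta_class E a b. \<alpha> v = v \<and> \<alpha> u = u"
  shows "\<forall>v\<in>V. \<alpha> v = v"
proof
  fix v assume v: "v \<in> V"
  have "symp E" "E b a" using assms(1,3) unfolding partial_cube_def graph_def by (auto intro: sympI)
  have fix_ab: "\<alpha> x = x" if "Theta E a b x y" for x y
    using assms(5) that unfolding theta_class_def by auto
  then have fix_ba: "\<alpha> x = x" if "Theta E b a x y" for x y
    using that Theta_swap[OF \<open>symp E\<close>] by blast
  consider "gdist E a v < gdist E b v" | "gdist E b v < gdist E a v"
    using partial_cube_gdist_edge_ends_neq[OF assms(1,3) v] by linarith
  then show "\<alpha> v = v"
  proof cases
    case 1
    show ?thesis
      using automorphism_fixing_Theta_class_fixes_vertex[OF assms(1,2,3,4) fix_ab v 1] .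
  next
    case 2
    show ?thesis
      using automorphism_fixing_Theta_class_fixes_vertex[OF assms(1,2) \<open>E b a\<close> assms(4)
          fix_ba v 2] .
  qed
qed

end
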